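(* $\mathcal{FSTA}^{F}_{\mathcal{F.V.}} > \mathcal{FSTA}^{F}_{\mathcal{L.V.}}$, i.e. the model $\mathcal{FSTA}$ under the fully synchronous scheduler with full visibility is computationally more powerful than the model $\mathcal{FSTA}$ under the fully synchronous scheduler with limited visibility.
   Context: Robots are anonymous, identical, autonomous computational entities viewed as points moving in the Euclidean plane. Each has its own local coordinate system, with no agreement between robots and no common chirality, and perceives itself at its origin. Robots operate in Look-Compute-Move cycles. In Look a robot takes an instantaneous snapshot of the positions (and visible lights, if any) of the robots it can see. In Compute it runs the common algorithm on the snapshot to obtain a destination. In Move it moves there. Models: - $\mathcal{OBLOT}$: robots are oblivious (no memory of previous cycles) and silent (no means of communication). - $\mathcal{LUMI}$: each robot carries a persistent light whose color is taken from a finite set and is set at the end of Compute; the light is visible to the robot itself and to the other robots. - $\mathcal{FSTA}$: the light is internal, visible only to its owner. It acts as a finite persistent state; there is no communication. - $\mathcal{FCOM}$: the light is visible only to the other robots. A robot does not see its own light and is otherwise oblivious. Schedulers: time is divided into rounds. Under the semi-synchronous scheduler $S$ (SSYNCH), in each round an adversarially chosen set of robots is activated and they perform one full cycle in perfect synchronization; every robot is activated infinitely often. Under the fully synchronous scheduler $F$ (FSYNCH), every robot is activated in every round. Visibility: - Full visibility $\mathcal{F.V.}$: every robot sees all robots. - Limited visibility $\mathcal{L.V.}$: a robot sees only the robots within a fixed distance $V_r$ of its current position, with $V_r$ the same for all robots. The visibility graph (robots adjacent iff they see each other) of the initial configuration is assumed connected. Relations: $\mathcal{M}^X_V$ denotes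 model $\mathcal{M}$ under scheduler $X$ with visibility $V$. For a team $R$ of robots, $Task(\mathcal{M},X,V;R)$ is the set of problems (tasks where robots must form some configuration(s) subject to conditions) solvable by $R$ in that setting. $\mathcal{R}$ is the set of all teams, and $\mathcal{R}_n$ the set of teams of size $n$. - $\mathcal{M}^{X_1}_{V_1} \ge \mathcal{N}^{X_2}_{V_2}$ if for all $R\in\mathcal{R}$, $Task(\mathcal{M},X_1,V_1;R)\supseteq Task(\mathcal{N},X_2,V_2;R)$. - $>$ means $\ge$ holds and there exists $R\in\mathcal{R}$ with $Task(\mathcal{M},X_1,V_1;R)\setminus Task(\mathcal{N},X_2,V_2;R)\neq\emptyset$. - $\perp$ (incomparable) means there exist $R_1,R_2\in\mathcal{R}$ with $Task(\mathcal{M},X_1,V_1;R_1)\setminus Task(\mathcal{N},X_2,V_2;R_1)\neq\emptyset$ and $Task(\mathcal{N},X_2,V_2;R_2)\setminus Task(\mathcal{M},X_1,V_1;R_2)\neq\emptyset$. *)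

theory Defs
  imports Complex_Main
begin

text \<open>Robots move in the Euclidean plane, modelled as the complex numbers.
  A team of n robots is indexed by 0..n-1.\<close>

type_synonym config = "nat \<Rightarrow> complex"

text \<open>A local coordinate system of a robot: its origin is always the robot's
  current position; the pair (u, b) gives the orientation of the axes
  (rotation by the unit complex u) and the handedness (b = True: mirrored).
  No agreement between robots: each robot has its own, arbitrary frame.\<close>
type_synonym frame = "complex \<times> bool"

definition valid_frame :: "frame \<Rightarrow> bool" where
  "valid_frame f \<longleftrightarrow> cmod (fst f) = 1"

definition to_global :: "frame \<Rightarrow> complex \<Rightarrow> complex" where
  "to_global f z = fst f * (if snd f then cnj z else z)"

definition to_local :: "frame \<Rightarrow> complex \<Rightarrow> complex" where
  "to_local f w = (if snd f then cnj (w / fst f) else w / fst f)"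

text \<open>FSTA algorithm: from the internal (persistent, private) state and the
  snapshot (positions of the visible robots, in local coordinates),
  compute the new state and the destination (in local coordinates).
  States are natural numbers; finiteness of the state set is imposed in
  the solvability definition.\<close>
type_synonym algorithm = "nat \<Rightarrow> complex set \<Rightarrow> nat \<times> complex"

type_synonym problem = "(nat \<Rightarrow> config) \<Rightarrow> bool"

text \<open>A team: number of robots n and visibility radius V_r.\<close>
type_synonym team = "nat \<times> real"

definition teams :: "team set" where
  "teams = {(n, r). 0 < n \<and> 0 < r}"

datatype visibility = FullVis | LimitedVis

definition visible :: "visibility \<Rightarrow> real \<Rightarrow> complex \<Rightarrow> complex \<Rightarrow> bool" where
  "visible v r x y = (case v of FullVis \<Rightarrow> True | LimitedVis \<Rightarrow> cmod (y - x) \<le> r)"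

definition snapshot ::
  "visibility \<Rightarrow> nat \<Rightarrow> real \<Rightarrow> (nat \<Rightarrow> frame) \<Rightarrow> config \<Rightarrow> nat \<Rightarrow> complex set" where
  "snapshot v n r fr c i =
     {to_local (fr i) (c j - c i) | j. j < n \<and> visible v r (c i) (c j)}"

text \<open>Execution under the fully synchronous scheduler: all robots are
  activated every round and move rigidly to their destinations.\<close>
fun exec :: "visibility \<Rightarrow> nat \<Rightarrow> real \<Rightarrow> algorithm \<Rightarrow> nat \<Rightarrow> (nat \<Rightarrow> frame)
              \<Rightarrow> config \<Rightarrow> nat \<Rightarrow> config \<times> (nat \<Rightarrow> nat)" where
  "exec v n r A q0 fr c0 0 = (c0, (\<lambda>_. q0))"
| "exec v n r A q0 fr c0 (Suc t) =
     (let (c, s) = exec v n r A q0 fr c0 t;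
          out = (\<lambda>i. A (s i) (snapshot v n r fr c i))
      in ((\<lambda>i. if i < n then c i + to_global (fr i) (snd (out i)) else c i),
          (\<lambda>i. if i < n then fst (out i) else s i)))"

definition trajectory :: "visibility \<Rightarrow> nat \<Rightarrow> real \<Rightarrow> algorithm \<Rightarrow> nat \<Rightarrow> (nat \<Rightarrow> frame)
              \<Rightarrow> config \<Rightarrow> nat \<Rightarrow> config" where
  "trajectory v n r A q0 fr c0 = (\<lambda>t. fst (exec v n r A q0 fr c0 t))"

definition vis_connected :: "nat \<Rightarrow> real \<Rightarrow> config \<Rightarrow> bool" where
  "vis_connected n r c \<longleftrightarrow>
     (\<forall>i<n. \<forall>j<n. (i, j) \<in> {(a, b). a < n \<and> b < n \<and> cmod (c a - c b) \<le> r}\<^sup>*)"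

definition admissible_init :: "nat \<Rightarrow> real \<Rightarrow> config \<Rightarrow> bool" where
  "admissible_init n r c \<longleftrightarrow>
     (\<forall>i<n. \<forall>j<n. i \<noteq> j \<longrightarrow> c i \<noteq> c j) \<and> vis_connected n r c"

definition FSTA_F_solves :: "visibility \<Rightarrow> team \<Rightarrow> problem \<Rightarrow> bool" where
  "FSTA_F_solves v R P =
     (case R of (n, r) \<Rightarrow>
       \<exists>Q q0 A. finite (Q :: nat set) \<and> q0 \<in> Q \<and> (\<forall>q\<in>Q. \<forall>S. fst (A q S) \<in> Q) \<and>
         (\<forall>fr c0. (\<forall>i<n. valid_frame (fr i)) \<longrightarrow> admissible_init n r c0 \<longrightarrow>
                   P (trajectory v n r A q0 fr c0)))"

definition Task_FSTA_F :: "visibility \<Rightarrow> team \<Rightarrow> problem set" where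
  "Task_FSTA_F v R = {P. FSTA_F_solves v R P}"

definition model_ge :: "(team \<Rightarrow> problem set) \<Rightarrow> (team \<Rightarrow> problem set) \<Rightarrow> bool" where
  "model_ge T1 T2 \<longleftrightarrow> (\<forall>R\<in>teams. T2 R \<subseteq> T1 R)"

definition model_gt :: "(team \<Rightarrow> problem set) \<Rightarrow> (team \<Rightarrow> problem set) \<Rightarrow> bool" where
  "model_gt T1 T2 \<longleftrightarrow> model_ge T1 T2 \<and> (\<exists>R\<in>teams. T1 R - T2 R \<noteq> {})"

end

theory Submission
  imports Defs
begin

text \<open>A fully visible robot can simulate a robot of limited visibility by discarding
  every robot farther away than \<open>V\<^sub>r\<close>, since local frames preserve distances; hence
  \<open>\<ge>\<close>. For strictness, consider the task in which every robot, in the first round,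
  moves by its eccentricity, the largest distance to another robot. With full
  visibility the eccentricity can be read off the snapshot. With limited visibility
  robot 0 of the configurations \<open>0, V\<^sub>r, 2V\<^sub>r\<close> and \<open>0, V\<^sub>r, 3V\<^sub>r/2\<close> gets the same
  snapshot and therefore makes the same move, although its eccentricities differ.\<close>

lemma norm_to_local: "valid_frame f \<Longrightarrow> cmod (to_local f w) = cmod w"
  unfolding valid_frame_def to_local_def by (auto simp: norm_divide)

lemma norm_to_global: "valid_frame f \<Longrightarrow> cmod (to_global f w) = cmod w"
  unfolding valid_frame_def to_global_def by (auto simp: norm_mult)

lemma snapshot_LimitedVis_eq_restrict:
  assumes "valid_frame (fr i)"
  shows "snapshot LimitedVis n r fr c i = {z \<in> snapshot FullVis n r fr c i. cmod z \<le> r}"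
  unfolding snapshot_def visible_def using norm_to_local[OF assms] by auto

lemma exec_FullVis_restrict_eq_exec_LimitedVis:
  assumes "\<forall>i<n. valid_frame (fr i)"
  shows "exec FullVis n r (\<lambda>q S. A q {z \<in> S. cmod z \<le> r}) q0 fr c0 t
           = exec LimitedVis n r A q0 fr c0 t"
proof (induction t)
  case 0
  then show ?case by simp
next
  case (Suc t)
  obtain c s where "exec LimitedVis n r A q0 fr c0 t = (c, s)" by fastforce
  with Suc assms show ?case
    by (auto simp: Let_def fun_eq_iff snapshot_LimitedVis_eq_restrict)
qed

lemma FSTA_F_solves_FullVis_if_LimitedVis:
  assumes "FSTA_F_solves LimitedVis (n, r) P"
  shows "FSTA_F_solves FullVis (n, r) P"
proof -
  obtain Q q0 A where Q: "finite (Q :: nat set)" "q0 \<in> Q" "\<forall>q\<in>Q. \<forall>S. fst (A q S) \<in> Q"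
    and solves: "\<forall>fr c0. (\<forall>i<n. valid_frame (fr i)) \<longrightarrow> admissible_init n r c0 \<longrightarrow>
                   P (trajectory LimitedVis n r A q0 fr c0)"
    using assms unfolding FSTA_F_solves_def by auto
  let ?B = "\<lambda>q S. A q {z \<in> S. cmod z \<le> r}"
  have "P (trajectory FullVis n r ?B q0 fr c0)"
    if "\<forall>i<n. valid_frame (fr i)" "admissible_init n r c0" for fr c0
    using solves that by (simp add: trajectory_def exec_FullVis_restrict_eq_exec_LimitedVis)
  with Q show ?thesis
    unfolding FSTA_F_solves_def by (auto intro!: exI[of _ Q] exI[of _ q0] exI[of _ ?B])
qed

lemma model_ge_FullVis_LimitedVis: "model_ge (Task_FSTA_F FullVis) (Task_FSTA_F LimitedVis)"
  unfolding model_ge_def Task_FSTA_F_def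
  using FSTA_F_solves_FullVis_if_LimitedVis by auto

lemma trajectory_0: "trajectory v n r A q0 fr c0 0 = c0"
  by (simp add: trajectory_def)

lemma first_move_norm:
  assumes "i < n" "valid_frame (fr i)"
  shows "cmod (trajectory v n r A q0 fr c0 1 i - trajectory v n r A q0 fr c0 0 i)
           = cmod (snd (A q0 (snapshot v n r fr c0 i)))"
  using assms by (simp add: trajectory_def norm_to_global)

definition eccentricity :: "nat \<Rightarrow> config \<Rightarrow> nat \<Rightarrow> real" where
  "eccentricity n c i = Max ((\<lambda>j. cmod (c j - c i)) ` {..<n})"

definition moves_by_eccentricity :: "nat \<Rightarrow> problem" where
  "moves_by_eccentricity n traj \<longleftrightarrow>
     (\<forall>i<n. cmod (traj 1 i - traj 0 i) = eccentricity n (traj 0) i)"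

lemma norm_image_snapshot_FullVis:
  assumes "valid_frame (fr i)"
  shows "cmod ` snapshot FullVis n r fr c i = (\<lambda>j. cmod (c j - c i)) ` {..<n}"
proof -
  have "snapshot FullVis n r fr c i = (\<lambda>j. to_local (fr i) (c j - c i)) ` {..<n}"
    unfolding snapshot_def visible_def by auto
  then show ?thesis
    by (simp add: image_image norm_to_local[OF assms])
qed

lemma eccentricity_nonneg:
  assumes "i < n"
  shows "0 \<le> eccentricity n c i"
proof -
  have "cmod (c i - c i) \<le> eccentricity n c i"
    unfolding eccentricity_def using assms by (intro Max_ge) auto
  then show ?thesis by simp
qed

lemma FSTA_F_solves_FullVis_moves_by_eccentricity:
  "FSTA_F_solves FullVis (n, r) (moves_by_eccentricity n)"
proof -
  let ?A = "\<lambda>q S. (q, complex_of_real (Max (cmod ` S)))"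
  have "moves_by_eccentricity n (trajectory FullVis n r ?A 0 fr c0)"
    if "\<forall>i<n. valid_frame (fr i)" for fr c0
    unfolding moves_by_eccentricity_def
  proof (intro allI impI)
    fix i assume "i < n"
    with that have "valid_frame (fr i)" by simp
    with \<open>i < n\<close> show "cmod (trajectory FullVis n r ?A 0 fr c0 1 i
        - trajectory FullVis n r ?A 0 fr c0 0 i) = eccentricity n (trajectory FullVis n r ?A 0 fr c0 0) i"
      using first_move_norm[of i n fr]
      by (simp add: trajectory_0 norm_image_snapshot_FullVis eccentricity_def[symmetric]
          eccentricity_nonneg)
  qed
  then show ?thesis
    unfolding FSTA_F_solves_def by (auto intro!: exI[of _ "{0}"] exI[of _ 0] exI[of _ ?A])
qed

lemma less_3_cases: "(j::nat) < 3 \<longleftrightarrow> j = 0 \<or> j = 1 \<or> j = 2"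
  by auto

lemma admissible_init_three:
  assumes "c 0 \<noteq> c 1" "c 1 \<noteq> c 2" "c 0 \<noteq> c 2"
    and "cmod (c 0 - c 1) \<le> r" "cmod (c 1 - c 2) \<le> r"
  shows "admissible_init 3 r c"
proof -
  let ?E = "{(a, b). a < (3::nat) \<and> b < 3 \<and> cmod (c a - c b) \<le> r}"
  have edges: "(0, 1) \<in> ?E" "(1, 0) \<in> ?E" "(1, 2) \<in> ?E" "(2, 1) \<in> ?E"
    using assms(4,5) by (auto simp: norm_minus_commute)
  then have paths: "(0, 2) \<in> ?E\<^sup>*" "(2, 0) \<in> ?E\<^sup>*"
    by (meson converse_rtrancl_into_rtrancl r_into_rtrancl)+
  have "vis_connected 3 r c"
    unfolding vis_connected_def
  proof (intro allI impI)
    fix i j :: nat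
    assume "i < 3" "j < 3"
    then have "i \<in> {0, 1, 2}" "j \<in> {0, 1, 2}" by auto
    with edges paths show "(i, j) \<in> ?E\<^sup>*" by (auto simp del: One_nat_def)
  qed
  moreover have "c i \<noteq> c j" if "i < 3" "j < 3" "i \<noteq> j" for i j :: nat
    using that assms(1-3) unfolding less_3_cases by (auto simp del: One_nat_def)
  ultimately show ?thesis
    unfolding admissible_init_def by blast
qed

lemma to_local_identity_frame: "to_local (1, False) w = w"
  by (simp add: to_local_def)

definition collinear_triple :: "real \<Rightarrow> real \<Rightarrow> config" where
  "collinear_triple r x = (\<lambda>j. complex_of_real (if j = 2 then x else r * real j))"

lemma admissible_init_collinear_triple:
  assumes "0 < r" "r < x" "x \<le> 2 * r"
  shows "admissible_init 3 r (collinear_triple r x)"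
proof -
  have "cmod (complex_of_real (r - x)) = x - r"
    using assms(2) by (simp only: norm_of_real)
  with assms show ?thesis
    by (intro admissible_init_three) (auto simp: collinear_triple_def)
qed

lemma snapshot_LimitedVis_collinear_triple:
  assumes "0 \<le> r" "r < x"
  shows "snapshot LimitedVis 3 r (\<lambda>_. (1, False)) (collinear_triple r x) 0 = {0, of_real r}"
proof -
  let ?c = "collinear_triple r x"
  have positions: "?c 0 = 0" "?c 1 = of_real r" "?c 2 = of_real x"
    by (simp_all add: collinear_triple_def)
  have "snapshot LimitedVis 3 r (\<lambda>_. (1, False)) ?c 0 = {?c j | j. j < 3 \<and> cmod (?c j) \<le> r}"
    unfolding snapshot_def visible_def to_local_identity_frame positions by simp
  also have "\<dots> = {0, of_real r}"
    unfolding less_3_cases using assms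
    by (auto simp: positions conj_disj_distribL conj_disj_distribR ex_disj_distrib
        simp del: One_nat_def)
  finally show ?thesis .
qed

lemma eccentricity_collinear_triple:
  assumes "0 \<le> r" "r \<le> x"
  shows "eccentricity 3 (collinear_triple r x) 0 = x"
  unfolding eccentricity_def
proof (rule Max_eqI)
  show "y \<le> x" if "y \<in> (\<lambda>j. cmod (collinear_triple r x j - collinear_triple r x 0)) ` {..<3}" for y
    using that assms by (auto simp: collinear_triple_def less_Suc_eq numeral_3_eq_3)
  show "x \<in> (\<lambda>j. cmod (collinear_triple r x j - collinear_triple r x 0)) ` {..<3}"
    using assms by (intro image_eqI[of _ _ 2]) (auto simp: collinear_triple_def)
qed simp

lemma not_FSTA_F_solves_LimitedVis_moves_by_eccentricity:
  assumes "0 < r"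
  shows "\<not> FSTA_F_solves LimitedVis (3, r) (moves_by_eccentricity 3)"
proof
  assume "FSTA_F_solves LimitedVis (3, r) (moves_by_eccentricity 3)"
  then obtain q0 A where solves: "\<forall>fr c0. (\<forall>i<3. valid_frame (fr i)) \<longrightarrow>
      admissible_init 3 r c0 \<longrightarrow> moves_by_eccentricity 3 (trajectory LimitedVis 3 r A q0 fr c0)"
    unfolding FSTA_F_solves_def by auto
  let ?fr = "\<lambda>_. (1, False) :: frame"
  have "cmod (snd (A q0 {0, of_real r})) = x" if "r < x" "x \<le> 2 * r" for x
  proof -
    have "moves_by_eccentricity 3 (trajectory LimitedVis 3 r A q0 ?fr (collinear_triple r x))"
      using solves admissible_init_collinear_triple[OF assms that]
      by (simp add: valid_frame_def)
    then have "cmod (trajectory LimitedVis 3 r A q0 ?fr (collinear_triple r x) 1 0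
        - trajectory LimitedVis 3 r A q0 ?fr (collinear_triple r x) 0 0) = x"
      using assms that
      by (simp add: moves_by_eccentricity_def trajectory_0 eccentricity_collinear_triple)
    then show ?thesis
      using first_move_norm[of 0 3 ?fr LimitedVis r A q0 "collinear_triple r x"] assms that
      by (simp add: valid_frame_def snapshot_LimitedVis_collinear_triple)
  qed
  from this[of "2 * r"] this[of "3 / 2 * r"] assms show False by simp
qed

theorem theorem3:
  shows "model_gt (Task_FSTA_F FullVis) (Task_FSTA_F LimitedVis)"
proof -
  have "moves_by_eccentricity 3 \<in> Task_FSTA_F FullVis (3, 1) - Task_FSTA_F LimitedVis (3, 1)"
    using FSTA_F_solves_FullVis_moves_by_eccentricity
      not_FSTA_F_solves_LimitedVis_moves_by_eccentricity[of 1]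
    by (simp add: Task_FSTA_F_def)
  moreover have "(3, 1) \<in> teams"
    by (simp add: teams_def)
  ultimately show ?thesis
    unfolding model_gt_def using model_ge_FullVis_LimitedVis by blast
qed

end
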